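(* Let $n\ge 27$, $\mathcal{X},\mathcal{Y}$ finite with $|\mathcal{X}|,|\mathcal{Y}|\ge 2$, $\mathbf{X}$ a random vector on $\mathcal{X}^n$ and $\mathbf{Y}$ with $\mathbf{Y}|\mathbf{X}\sim p^n_{Y|X}$. Let $\lambda>0$ and $t\in\mathbb{N}_+$ with $\lambda t>n\log_2|\mathcal{Y}|$, and for $s\in[0:t]$ let $\mathcal{S}_{\mathbf{Y}}(s)=\{\mathbf{y}:p_{\mathbf{Y}}(\mathbf{y})>0,\ \lfloor\min(h_{\mathbf{Y}}(\mathbf{y})/\lambda,t)\rfloor=s\}$ and $\eta_s=p_{\mathbf{Y}}\left(\bigcup_{i=0}^s\mathcal{S}_{\mathbf{Y}}(i)\right)$. Then for each $s\in[0:t]$, $\bigcup_{i=0}^s\mathcal{S}_{\mathbf{Y}}(i)$ is the unique minimum $\eta_s$-quasi image of $\mathbf{X}$ by $p_{Y|X}$, and $$\log_2\bar g^n_{Y|X}(\mathbf{X},\eta_s)<s\lambda+\lambda+\log_2(t+1),\qquad \log_2\bar g^n_{Y|X}(\mathbf{X},\eta_s)\ge s\lambda+\log_2 p_{\mathbf{Y}}(\mathcal{S}_{\mathbf{Y}}(s)).$$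
   Context: $h_{\mathbf{Y}}(\mathbf{y})=-\log_2 p_{\mathbf{Y}}(\mathbf{y})$. For $\eta\in(0,1]$, a set $\mathcal{B}\subseteq\mathcal{Y}^n$ is an $\eta$-quasi image of $\mathbf{X}$ by $p_{Y|X}$ if $\sum_{\mathbf{x}}p^n_{Y|X}(\mathcal{B}|\mathbf{x})p_{\mathbf{X}}(\mathbf{x})\ge\eta$; $\bar g^n_{Y|X}(\mathbf{X},\eta)$ is the minimum cardinality of such a set, and a minimum $\eta$-quasi image is one achieving it. *)

theory Defs
  imports "HOL-Analysis.Analysis"
begin

definition seqs :: "nat \<Rightarrow> 'a list set" where
  "seqs n = {xs. length xs = n}"

text \<open>Memoryless channel: W x y = p_{Y|X}(y|x); product channel p^n_{Y|X}(ys|xs).\<close>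
definition chan_n :: "('a \<Rightarrow> 'b \<Rightarrow> real) \<Rightarrow> 'a list \<Rightarrow> 'b list \<Rightarrow> real" where
  "chan_n W xs ys = (\<Prod>i<length xs. W (xs ! i) (ys ! i))"

definition outp :: "nat \<Rightarrow> ('a list \<Rightarrow> real) \<Rightarrow> ('a \<Rightarrow> 'b \<Rightarrow> real) \<Rightarrow> 'b list \<Rightarrow> real" where
  "outp n pX W ys = (\<Sum>xs\<in>seqs n. pX xs * chan_n W xs ys)"

definition selfinfo :: "nat \<Rightarrow> ('a list \<Rightarrow> real) \<Rightarrow> ('a \<Rightarrow> 'b \<Rightarrow> real) \<Rightarrow> 'b list \<Rightarrow> real" where
  "selfinfo n pX W ys = - log 2 (outp n pX W ys)"

definition quasi_image :: "nat \<Rightarrow> ('a list \<Rightarrow> real) \<Rightarrow> ('a \<Rightarrow> 'b \<Rightarrow> real) \<Rightarrow> real \<Rightarrow> 'b list set \<Rightarrow> bool" where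
  "quasi_image n pX W eta B \<longleftrightarrow> B \<subseteq> seqs n \<and>
     (\<Sum>xs\<in>seqs n. (\<Sum>ys\<in>B. chan_n W xs ys) * pX xs) \<ge> eta"

definition gbar :: "nat \<Rightarrow> ('a list \<Rightarrow> real) \<Rightarrow> ('a \<Rightarrow> 'b \<Rightarrow> real) \<Rightarrow> real \<Rightarrow> nat" where
  "gbar n pX W eta = (LEAST k. \<exists>B. quasi_image n pX W eta B \<and> card B = k)"

definition min_quasi_image :: "nat \<Rightarrow> ('a list \<Rightarrow> real) \<Rightarrow> ('a \<Rightarrow> 'b \<Rightarrow> real) \<Rightarrow> real \<Rightarrow> 'b list set \<Rightarrow> bool" where
  "min_quasi_image n pX W eta B \<longleftrightarrow> quasi_image n pX W eta B \<and> card B = gbar n pX W eta"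

definition Sset :: "nat \<Rightarrow> ('a list \<Rightarrow> real) \<Rightarrow> ('a \<Rightarrow> 'b \<Rightarrow> real) \<Rightarrow> real \<Rightarrow> nat \<Rightarrow> nat \<Rightarrow> 'b list set" where
  "Sset n pX W lam t s = {ys \<in> seqs n. outp n pX W ys > 0 \<and>
      \<lfloor>min (selfinfo n pX W ys / lam) (real t)\<rfloor> = int s}"

end

theory Submission
  imports Defs
begin

text \<open>
  Since the self-information is capped at level \<open>t\<close>, the union \<open>U\<close> of the slices
  \<open>S\<^sub>Y(0), ..., S\<^sub>Y(s)\<close> is a superlevel set \<open>{y. c < p\<^sub>Y(y)}\<close> of the output
  distribution, with \<open>c = 2 powr (-(s + 1) \<lambda>)\<close> for \<open>s < t\<close> and \<open>c = 0\<close> for \<open>s = t\<close>.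
  For \<open>c \<ge> 0\<close> a superlevel set carries strictly more weight than any other set of
  at most its size, so it is the unique minimum quasi image for its own weight.
  Its size is below \<open>1 / c = 2 powr ((s + 1) \<lambda>)\<close>, and for \<open>s = t\<close> at most
  \<open>|Y|^n < 2 powr (t \<lambda>)\<close>. Conversely \<open>U\<close> contains \<open>S\<^sub>Y(s)\<close>, whose elements have probability at
  most \<open>2 powr (-s \<lambda>)\<close>, which gives the lower bound.
\<close>

lemma superlevel_set_eqI:
  fixes P :: "'c \<Rightarrow> real" and A :: "'c set" and c :: real
  defines "U \<equiv> {z \<in> A. c < P z}"
  assumes "finite A" "0 \<le> c" "B \<subseteq> A"
    and "sum P U \<le> sum P B" "card B \<le> card U"
  shows "B = U"
proof (rule ccontr)
  assume "B \<noteq> U"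
  have fin: "finite U" "finite B"
    using assms(2,4) unfolding U_def by (auto intro: finite_subset)
  have "U - B \<noteq> {}"
  proof
    assume "U - B = {}"
    then have "U \<subseteq> B"
      by blast
    then have "U = B"
      using fin assms(6) by (intro card_subset_eq) (auto dest: card_mono)
    then show False
      using \<open>B \<noteq> U\<close> by simp
  qed
  have "card (B - U) \<le> card (U - B)"
    using fin assms(6) by (simp add: card_Diff_subset_Int Int_commute)
  have "sum P (B - U) \<le> real (card (B - U)) * c"
    using assms(4) by (intro sum_bounded_above) (auto simp: U_def not_less)
  also have "\<dots> \<le> real (card (U - B)) * c"
    using \<open>card (B - U) \<le> card (U - B)\<close> assms(3) by (simp add: mult_right_mono)
  also have "\<dots> = (\<Sum>_\<in>U - B. c)"
    by simp
  also have "\<dots> < sum P (U - B)"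
    using fin \<open>U - B \<noteq> {}\<close> by (intro sum_strict_mono) (auto simp: U_def)
  finally have "sum P (B - U) < sum P (U - B)" .
  moreover have "sum P B = sum P (B \<inter> U) + sum P (B - U)"
    "sum P U = sum P (U \<inter> B) + sum P (U - B)"
    using fin by (simp_all add: sum.Int_Diff)
  ultimately show False
    using assms(5) by (simp add: Int_commute)
qed

lemma finite_seqs: "finite (seqs n :: 'a::finite list set)"
  using finite_lists_length_eq[of "UNIV :: 'a set" n] by (simp add: seqs_def)

lemma card_seqs: "card (seqs n :: 'a::finite list set) = CARD('a) ^ n"
  using card_lists_length_eq[of "UNIV :: 'a set" n] by (simp add: seqs_def)

lemma seqs_Suc: "seqs (Suc n) = (\<lambda>(y, ys). y # ys) ` (UNIV \<times> seqs n)"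
  unfolding seqs_def by (auto simp: image_iff length_Suc_conv)

lemma chan_n_Cons: "chan_n W (x # xs) (y # ys) = W x y * chan_n W xs ys"
  unfolding chan_n_def length_Cons prod.lessThan_Suc_shift by simp

lemma sum_chan_n_eq_1:
  fixes W :: "'a \<Rightarrow> 'b::finite \<Rightarrow> real"
  assumes "\<And>x. (\<Sum>y\<in>UNIV. W x y) = 1"
  shows "(\<Sum>ys\<in>seqs (length xs). chan_n W xs ys) = 1"
proof (induction xs)
  case Nil
  have "seqs 0 = {[] :: 'b list}"
    by (auto simp: seqs_def)
  then show ?case
    by (simp add: chan_n_def)
next
  case (Cons x xs)
  have "inj_on (\<lambda>(y, ys). y # ys) (UNIV \<times> seqs (length xs))"
    by (auto simp: inj_on_def)
  then have "(\<Sum>ys\<in>seqs (length (x # xs)). chan_n W (x # xs) ys)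
      = (\<Sum>(y, ys)\<in>UNIV \<times> seqs (length xs). chan_n W (x # xs) (y # ys))"
    unfolding length_Cons seqs_Suc by (rule sum.reindex_cong) auto
  also have "\<dots> = (\<Sum>y\<in>UNIV. \<Sum>ys\<in>seqs (length xs). W x y * chan_n W xs ys)"
    by (simp add: sum.cartesian_product chan_n_Cons)
  also have "\<dots> = (\<Sum>y\<in>UNIV. W x y)"
    by (simp add: sum_distrib_left[symmetric] Cons.IH)
  finally show ?case
    using assms by simp
qed

lemma sum_chan_n_outp:
  "(\<Sum>xs\<in>seqs n. (\<Sum>ys\<in>B. chan_n W xs ys) * pX xs) = (\<Sum>ys\<in>B. outp n pX W ys)"
  unfolding outp_def sum_distrib_right by (subst sum.swap) (simp add: mult.commute)

lemma quasi_image_iff: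
  "quasi_image n pX W eta B \<longleftrightarrow> B \<subseteq> seqs n \<and> eta \<le> (\<Sum>ys\<in>B. outp n pX W ys)"
  unfolding quasi_image_def sum_chan_n_outp ..

lemma gbar_eqI:
  assumes "quasi_image n pX W eta U"
    and "\<And>B. quasi_image n pX W eta B \<Longrightarrow> card U \<le> card B"
  shows "gbar n pX W eta = card U"
  unfolding gbar_def using assms by (intro Least_equality) auto

lemma superlevel_set_min_quasi_image:
  fixes n :: nat and pX :: "'a list \<Rightarrow> real" and W :: "'a \<Rightarrow> 'b::finite \<Rightarrow> real"
    and c :: real
  defines "U \<equiv> {ys \<in> seqs n. c < outp n pX W ys}"
  defines "eta \<equiv> (\<Sum>ys\<in>U. outp n pX W ys)"
  assumes "0 \<le> c"
  shows gbar_superlevel_set: "gbar n pX W eta = card U"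
    and min_quasi_image_superlevel_set_iff: "min_quasi_image n pX W eta B \<longleftrightarrow> B = U"
proof -
  have unique: "B' = U" if "quasi_image n pX W eta B'" "card B' \<le> card U" for B'
    using that finite_seqs assms(3) unfolding U_def eta_def quasi_image_iff
    by (intro superlevel_set_eqI) auto
  have "quasi_image n pX W eta U"
    by (auto simp: quasi_image_iff U_def eta_def)
  moreover have "card U \<le> card B'" if "quasi_image n pX W eta B'" for B'
    using unique[OF that] by fastforce
  ultimately show "gbar n pX W eta = card U"
    by (rule gbar_eqI)
  then show "min_quasi_image n pX W eta B \<longleftrightarrow> B = U"
    using unique[of B] \<open>quasi_image n pX W eta U\<close> unfolding min_quasi_image_def by auto
qed

definition level_threshold :: "real \<Rightarrow> nat \<Rightarrow> nat \<Rightarrow> real" where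
  "level_threshold lam t s = (if s < t then 2 powr (- (real s + 1) * lam) else 0)"

lemma level_threshold_nonneg: "0 \<le> level_threshold lam t s"
  by (simp add: level_threshold_def)

lemma floor_level_atMost_iff:
  fixes p lam :: real and s t :: nat
  assumes "0 < p" "p \<le> 1" "0 < lam" "s \<le> t"
  shows "(\<exists>i\<le>s. \<lfloor>min (- log 2 p / lam) (real t)\<rfloor> = int i) \<longleftrightarrow> level_threshold lam t s < p"
proof -
  have "log 2 p \<le> 0"
    using assms(1,2) by simp
  then have "0 \<le> - log 2 p / lam"
    using assms(3) by (simp add: divide_nonpos_pos)
  then have "0 \<le> \<lfloor>min (- log 2 p / lam) (real t)\<rfloor>"
    by simp
  then have "(\<exists>i\<le>s. \<lfloor>min (- log 2 p / lam) (real t)\<rfloor> = int i)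
      \<longleftrightarrow> \<lfloor>min (- log 2 p / lam) (real t)\<rfloor> \<le> int s"
    by (auto intro!: exI[of _ "nat \<lfloor>min (- log 2 p / lam) (real t)\<rfloor>"])
  also have "\<dots> \<longleftrightarrow> min (- log 2 p / lam) (real t) < real s + 1"
    by (simp add: floor_le_iff)
  also have "\<dots> \<longleftrightarrow> level_threshold lam t s < p"
  proof (cases "s < t")
    case True
    then have "min (- log 2 p / lam) (real t) < real s + 1 \<longleftrightarrow> - log 2 p / lam < real s + 1"
      by auto
    also have "\<dots> \<longleftrightarrow> - (real s + 1) * lam < log 2 p"
      using assms(3) by (simp only: pos_divide_less_eq) linarith
    also have "\<dots> \<longleftrightarrow> 2 powr (- (real s + 1) * lam) < p"
      using assms(1) by (simp add: less_log_iff)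
    finally show ?thesis
      using True by (simp add: level_threshold_def)
  qed (use assms in \<open>auto simp: level_threshold_def\<close>)
  finally show ?thesis .
qed

lemma floor_level_eq_imp_le_powr:
  fixes p lam :: real and s t :: nat
  assumes "0 < p" "0 < lam" "\<lfloor>min (- log 2 p / lam) (real t)\<rfloor> = int s"
  shows "p \<le> 2 powr (- real s * lam)"
proof -
  have "real s \<le> min (- log 2 p / lam) (real t)"
    using of_int_floor_le[of "min (- log 2 p / lam) (real t)"] assms(3) by simp
  then have "real s \<le> - log 2 p / lam"
    by simp
  then have "real s * lam \<le> - log 2 p"
    using assms(2) by (simp only: pos_le_divide_eq)
  then have "log 2 p \<le> - real s * lam"
    by simp
  then show ?thesis
    using assms(1) by (simp add: log_le_iff)
qed

locale channel_input =
  fixes n :: nat and pX :: "'a::finite list \<Rightarrow> real" and W :: "'a \<Rightarrow> 'b::finite \<Rightarrow> real"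
  assumes pX_nonneg: "\<And>xs. 0 \<le> pX xs" and sum_pX: "(\<Sum>xs\<in>seqs n. pX xs) = 1"
    and W_nonneg: "\<And>x y. 0 \<le> W x y" and sum_W: "\<And>x. (\<Sum>y\<in>UNIV. W x y) = 1"
begin

abbreviation pY :: "'b list \<Rightarrow> real" where
  "pY \<equiv> outp n pX W"

lemma pY_nonneg: "0 \<le> pY ys"
  unfolding outp_def chan_n_def
  by (intro sum_nonneg mult_nonneg_nonneg prod_nonneg pX_nonneg W_nonneg)

lemma sum_pY: "(\<Sum>ys\<in>seqs n. pY ys) = 1"
proof -
  have "(\<Sum>ys\<in>seqs n. pY ys) = (\<Sum>xs\<in>seqs n. pX xs * (\<Sum>ys\<in>seqs n. chan_n W xs ys))"
    unfolding outp_def sum_distrib_left by (rule sum.swap)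
  also have "\<dots> = (\<Sum>xs\<in>seqs n. pX xs)"
    using sum_chan_n_eq_1[of W, OF sum_W] by (intro sum.cong) (auto simp: seqs_def)
  finally show ?thesis
    using sum_pX by simp
qed

lemma pY_le_1: "ys \<in> seqs n \<Longrightarrow> pY ys \<le> 1"
  using member_le_sum[of ys "seqs n" pY] finite_seqs pY_nonneg sum_pY by auto

lemma card_superlevel_set_mult_less_1: "real (card {ys \<in> seqs n. c < pY ys}) * c < 1"
proof (cases "{ys \<in> seqs n. c < pY ys} = {}")
  case False
  have fin: "finite {ys \<in> seqs n. c < pY ys}"
    by (rule finite_subset[OF _ finite_seqs]) auto
  have "real (card {ys \<in> seqs n. c < pY ys}) * c = (\<Sum>_\<in>{ys \<in> seqs n. c < pY ys}. c)"
    by simp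
  also have "\<dots> < (\<Sum>ys\<in>{ys \<in> seqs n. c < pY ys}. pY ys)"
    using False fin by (intro sum_strict_mono) auto
  also have "\<dots> \<le> (\<Sum>ys\<in>seqs n. pY ys)"
    using finite_seqs pY_nonneg by (intro sum_mono2) auto
  finally show ?thesis
    using sum_pY by simp
next
  case True
  show ?thesis
    unfolding True by simp
qed

lemma Union_Sset_eq_superlevel_set:
  assumes "0 < lam" "s \<le> t"
  shows "(\<Union>i\<le>s. Sset n pX W lam t i) = {ys \<in> seqs n. level_threshold lam t s < pY ys}"
proof -
  have "0 \<le> level_threshold lam t s"
    by (rule level_threshold_nonneg)
  moreover have "ys \<in> (\<Union>i\<le>s. Sset n pX W lam t i) \<longleftrightarrow>
      ys \<in> seqs n \<and> 0 < pY ys \<and> (\<exists>i\<le>s. \<lfloor>min (- log 2 (pY ys) / lam) (real t)\<rfloor> = int i)" for ys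
    by (auto simp: Sset_def selfinfo_def)
  ultimately show ?thesis
    using floor_level_atMost_iff[OF _ pY_le_1 assms] by (auto intro: le_less_trans)
qed

lemma gbar_Union_Sset:
  assumes "0 < lam" "s \<le> t"
  shows "gbar n pX W (\<Sum>ys\<in>(\<Union>i\<le>s. Sset n pX W lam t i). pY ys) = card (\<Union>i\<le>s. Sset n pX W lam t i)"
  unfolding Union_Sset_eq_superlevel_set[OF assms] by (intro gbar_superlevel_set level_threshold_nonneg)

lemma min_quasi_image_Union_Sset_iff:
  assumes "0 < lam" "s \<le> t"
  shows "min_quasi_image n pX W (\<Sum>ys\<in>(\<Union>i\<le>s. Sset n pX W lam t i). pY ys) B
    \<longleftrightarrow> B = (\<Union>i\<le>s. Sset n pX W lam t i)"
  unfolding Union_Sset_eq_superlevel_set[OF assms]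
  by (intro min_quasi_image_superlevel_set_iff level_threshold_nonneg)

lemma sum_Sset_le:
  assumes "0 < lam"
  shows "(\<Sum>ys\<in>Sset n pX W lam t s. pY ys) \<le> real (card (Sset n pX W lam t s)) * 2 powr (- real s * lam)"
  using floor_level_eq_imp_le_powr[OF _ assms]
  by (intro sum_bounded_above) (auto simp: Sset_def selfinfo_def)

lemma log_card_Union_Sset_less:
  assumes "0 < lam" "s \<le> t" "real n * log 2 (real CARD('b)) < lam * real t"
    and "0 < card (\<Union>i\<le>s. Sset n pX W lam t i)"
  shows "log 2 (real (card (\<Union>i\<le>s. Sset n pX W lam t i))) < (real s + 1) * lam"
proof (cases "s < t")
  case True
  have "real (card (\<Union>i\<le>s. Sset n pX W lam t i)) * 2 powr (- (real s + 1) * lam) < 1"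
    using card_superlevel_set_mult_less_1
    by (simp add: Union_Sset_eq_superlevel_set[OF assms(1,2)] level_threshold_def True)
  moreover have "2 powr (- (real s + 1) * lam) = inverse (2 powr ((real s + 1) * lam))"
    by (subst mult_minus_left) (rule powr_minus)
  ultimately have "real (card (\<Union>i\<le>s. Sset n pX W lam t i)) / 2 powr ((real s + 1) * lam) < 1"
    by (simp only: divide_inverse)
  then have "real (card (\<Union>i\<le>s. Sset n pX W lam t i)) < 2 powr ((real s + 1) * lam)"
    by (subst (asm) pos_divide_less_eq) simp_all
  then show ?thesis
    using assms(4) by (simp add: log_less_iff)
next
  case False
  then have "s = t"
    using assms(2) by simp
  have "card (\<Union>i\<le>s. Sset n pX W lam t i) \<le> card (seqs n :: 'b list set)"
    using finite_seqs by (intro card_mono) (auto simp: Sset_def)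
  then have "log 2 (real (card (\<Union>i\<le>s. Sset n pX W lam t i))) \<le> log 2 (real CARD('b) ^ n)"
    using assms(4) by (simp add: card_seqs)
  then show ?thesis
    using assms(1,3) \<open>s = t\<close> by (simp add: log_nat_power algebra_simps)
qed

lemma log_card_Union_Sset_ge:
  assumes "0 < lam" "s \<le> t" "0 < (\<Sum>ys\<in>Sset n pX W lam t s. pY ys)"
  shows "real s * lam + log 2 (\<Sum>ys\<in>Sset n pX W lam t s. pY ys)
    \<le> log 2 (real (card (\<Union>i\<le>s. Sset n pX W lam t i)))"
proof -
  let ?S = "Sset n pX W lam t s" and ?U = "\<Union>i\<le>s. Sset n pX W lam t i"
  have "?S \<subseteq> ?U"
    using assms(2) by auto
  have "finite ?U"
    by (rule finite_subset[OF _ finite_seqs]) (auto simp: Sset_def)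
  then have "card ?S \<le> card ?U"
    using \<open>?S \<subseteq> ?U\<close> by (intro card_mono)
  moreover have "0 < card ?S"
    using assms(3) finite_subset[OF \<open>?S \<subseteq> ?U\<close> \<open>finite ?U\<close>] by (auto simp: card_gt_0_iff)
  ultimately have "0 < card ?U"
    by linarith
  have "(\<Sum>ys\<in>?S. pY ys) \<le> real (card ?S) * 2 powr (- real s * lam)"
    using assms(1) by (rule sum_Sset_le)
  also have "\<dots> \<le> real (card ?U) * 2 powr (- real s * lam)"
    using \<open>card ?S \<le> card ?U\<close> by (intro mult_right_mono) simp_all
  finally have "log 2 (\<Sum>ys\<in>?S. pY ys) \<le> log 2 (real (card ?U) * 2 powr (- real s * lam))"
    using assms(3) by (intro log_mono) simp_all
  also have "\<dots> = log 2 (real (card ?U)) - real s * lam"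
    using \<open>0 < card ?U\<close> by (simp add: log_mult)
  finally show ?thesis
    by simp
qed

end

theorem lemma24:
  fixes n t :: nat and lam :: real
    and pX :: "('a::finite) list \<Rightarrow> real" and W :: "'a \<Rightarrow> ('b::finite) \<Rightarrow> real"
  assumes "n \<ge> 27"
    and "CARD('a) \<ge> 2" and "CARD('b) \<ge> 2"
    and "\<forall>xs. pX xs \<ge> 0" and "(\<Sum>xs\<in>seqs n. pX xs) = 1"
    and "\<forall>x y. W x y \<ge> 0" and "\<forall>x. (\<Sum>y\<in>UNIV. W x y) = 1"
    and "lam > 0" and "t \<ge> 1"
    and "lam * real t > real n * log 2 (real CARD('b))"
  shows "\<forall>s\<le>t.
    let U = (\<Union>i\<le>s. Sset n pX W lam t i);
        eta = (\<Sum>ys\<in>U. outp n pX W ys);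
        g = gbar n pX W eta
    in (\<forall>B. min_quasi_image n pX W eta B \<longleftrightarrow> B = U)
       \<and> (g > 0 \<longrightarrow> log 2 (real g) < real s * lam + lam + log 2 (real t + 1))
       \<and> ((\<Sum>ys\<in>Sset n pX W lam t s. outp n pX W ys) > 0 \<longrightarrow>
            log 2 (real g) \<ge> real s * lam + log 2 (\<Sum>ys\<in>Sset n pX W lam t s. outp n pX W ys))"
proof -
  interpret channel_input n pX W
    using assms(4-7) by unfold_locales auto
  have upper: "log 2 (real (card (\<Union>i\<le>s. Sset n pX W lam t i))) < real s * lam + lam + log 2 (real t + 1)"
    if "s \<le> t" "0 < card (\<Union>i\<le>s. Sset n pX W lam t i)" for s
  proof -
    have "0 \<le> log 2 (real t + 1)"
      by simp
    then show ?thesis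
      using log_card_Union_Sset_less[OF assms(8) that(1) assms(10) that(2)]
      unfolding distrib_right by linarith
  qed
  show ?thesis
    using gbar_Union_Sset[OF assms(8)] min_quasi_image_Union_Sset_iff[OF assms(8)]
      upper log_card_Union_Sset_ge[OF assms(8)]
    by (simp add: Let_def)
qed

end
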